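(* Let $K$ be a field, $s\ge2$, $S=K[t_1,\ldots,t_s]$ with each $t_i$ of degree $1$, and let $\mathcal{L}\subset\mathbb{Z}^s$ be a lattice such that $I(\mathcal{L})$ is a graded ideal with $\dim S/I(\mathcal{L})=1$. Then $\mathbb{Z}^s/\mathcal{L}$ is torsion-free if and only if $I(\mathcal{L})=(t_1-t_s,\ldots,t_{s-1}-t_s)$.
   Context: A lattice is a subgroup of $\mathbb{Z}^s$. For $a\in\mathbb{Z}^s$ write $a=a^+-a^-$ with $a^+,a^-\in\mathbb{N}^s$ of disjoint supports, $t^c=t_1^{c_1}\cdots t_s^{c_s}$; $I(\mathcal{L})=(\{t^{a^+}-t^{a^-}:a\in\mathcal{L}\})$. Graded means generated by homogeneous polynomials; $\dim$ is Krull dimension. *)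

theory Defs
  imports "HOL-Library.Poly_Mapping" "HOL-Library.Cardinality"
begin

text \<open>Polynomial ring K[t_i : i in 'n] over a field, variables indexed by a finite type 'n
  (so s = CARD('n)).\<close>

type_synonym ('n, 'k) mpoly = "('n \<Rightarrow>\<^sub>0 nat) \<Rightarrow>\<^sub>0 'k"

definition var :: "'n \<Rightarrow> ('n, 'k::comm_ring_1) mpoly" where
  "var i = Poly_Mapping.single (Poly_Mapping.single i 1) 1"

definition monom_of :: "('n::finite \<Rightarrow> nat) \<Rightarrow> ('n, 'k::comm_ring_1) mpoly" where
  "monom_of c = Poly_Mapping.single (Abs_poly_mapping c) 1"

definition pos_part :: "('n \<Rightarrow> int) \<Rightarrow> 'n \<Rightarrow> nat" where
  "pos_part a = (\<lambda>i. nat (a i))"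
definition neg_part :: "('n \<Rightarrow> int) \<Rightarrow> 'n \<Rightarrow> nat" where
  "neg_part a = (\<lambda>i. nat (- a i))"

definition is_lattice :: "('n \<Rightarrow> int) set \<Rightarrow> bool" where
  "is_lattice L \<longleftrightarrow> (\<lambda>_. 0) \<in> L \<and> (\<forall>a\<in>L. \<forall>b\<in>L. (\<lambda>i. a i + b i) \<in> L)
     \<and> (\<forall>a\<in>L. (\<lambda>i. - a i) \<in> L)"

definition is_ideal :: "'a::comm_ring_1 set \<Rightarrow> bool" where
  "is_ideal I \<longleftrightarrow> 0 \<in> I \<and> (\<forall>a\<in>I. \<forall>b\<in>I. a + b \<in> I) \<and> (\<forall>r. \<forall>a\<in>I. r * a \<in> I)"

definition ideal_gen :: "'a::comm_ring_1 set \<Rightarrow> 'a set" where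
  "ideal_gen G = \<Inter>{J. is_ideal J \<and> G \<subseteq> J}"

definition prime_ideal :: "'a::comm_ring_1 set \<Rightarrow> bool" where
  "prime_ideal P \<longleftrightarrow> is_ideal P \<and> 1 \<notin> P \<and> (\<forall>a b. a * b \<in> P \<longrightarrow> a \<in> P \<or> b \<in> P)"

definition lattice_ideal :: "('n::finite \<Rightarrow> int) set \<Rightarrow> ('n, 'k::comm_ring_1) mpoly set" where
  "lattice_ideal L = ideal_gen {monom_of (pos_part a) - monom_of (neg_part a) | a. a \<in> L}"

definition tdeg :: "('n::finite \<Rightarrow>\<^sub>0 nat) \<Rightarrow> nat" where
  "tdeg m = (\<Sum>i\<in>UNIV. Poly_Mapping.lookup m i)"

definition homogeneous :: "('n::finite, 'k::comm_ring_1) mpoly \<Rightarrow> bool" where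
  "homogeneous f \<longleftrightarrow> (\<exists>d. \<forall>m\<in>Poly_Mapping.keys f. tdeg m = d)"

definition graded_ideal :: "('n::finite, 'k::comm_ring_1) mpoly set \<Rightarrow> bool" where
  "graded_ideal I \<longleftrightarrow> (\<exists>G. (\<forall>g\<in>G. homogeneous g) \<and> I = ideal_gen G)"

text \<open>Krull dimension of R/I: supremum of lengths n of chains P_0 < P_1 < ... < P_n of prime
  ideals of R/I, i.e. of prime ideals of R containing I. "dim R/I = n" (n finite) means a chain of
  length n exists and no chain of length n+1 exists.\<close>
definition prime_chain_over :: "'a::comm_ring_1 set \<Rightarrow> nat \<Rightarrow> bool" where
  "prime_chain_over I n \<longleftrightarrow> (\<exists>P :: nat \<Rightarrow> 'a set.
      (\<forall>j\<le>n. prime_ideal (P j) \<and> I \<subseteq> P j) \<and> (\<forall>j<n. P j \<subset> P (Suc j)))"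

definition krull_dim_quot_eq :: "'a::comm_ring_1 set \<Rightarrow> nat \<Rightarrow> bool" where
  "krull_dim_quot_eq I n \<longleftrightarrow> prime_chain_over I n \<and> \<not> prime_chain_over I (Suc n)"

definition torsion_free_quot :: "('n \<Rightarrow> int) set \<Rightarrow> bool" where
  "torsion_free_quot L \<longleftrightarrow> (\<forall>a. \<forall>k::int. k \<noteq> 0 \<and> (\<lambda>i. k * a i) \<in> L \<longrightarrow> a \<in> L)"

end

theory Submission
  imports Defs "HOL-Library.Function_Algebras" "HOL-Computational_Algebra.Polynomial"
begin

text \<open>Let \<open>H\<close> be the lattice of integer vectors with coordinate sum zero; \<open>I(H)\<close> is
  generated by the differences \<open>t\<^sub>i - t\<^sub>s\<close>. The monomials of a polynomial fall into cosets
  of \<open>L\<close>, and the polynomials whose coefficients sum to zero on every coset form an ideal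
  containing \<open>I(L)\<close> but no binomial \<open>t^a\<^sup>+ - t^a\<^sup>-\<close> with \<open>a \<notin> L\<close>. Hence \<open>I(L)\<close>
  determines \<open>L\<close>, and testing the homogeneous generators of a graded \<open>I(L)\<close> against the
  cosets of \<open>L \<inter> H\<close> shows \<open>L \<subseteq> H\<close>. Thus \<open>I(L) = I(H)\<close> means \<open>L = H\<close>, and \<open>\<int>\<^sup>s/H \<cong> \<int>\<close>
  is torsion-free. Conversely, if \<open>\<int>\<^sup>s/L\<close> is torsion-free but \<open>L \<noteq> H\<close>, linear algebra over
  \<open>\<rat>\<close> yields a nonnegative integer weight \<open>w\<close>, orthogonal to \<open>L\<close> and not constant. The
  kernels of \<open>t\<^sub>i \<mapsto> x^(w i) y\<close>, \<open>t\<^sub>i \<mapsto> x\<close> and \<open>t\<^sub>i \<mapsto> 0\<close> then form a chain of three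
  prime ideals over \<open>I(L)\<close>, contradicting \<open>dim S/I(L) = 1\<close>.\<close>

lemma poly_mapping_single_add_induct [case_names zero single_add]:
  assumes "P 0" "\<And>a b f. P f \<Longrightarrow> P (Poly_Mapping.single a b + f)"
  shows "P f"
proof (induction f rule: update_induct)
  case const
  then show ?case using assms(1) .
next
  case (update f a b)
  have "Poly_Mapping.update a b f = Poly_Mapping.single a b + f"
    using update(1)
    by (intro poly_mapping_eqI) (auto simp: lookup_update lookup_add lookup_single in_keys_iff)
  then show ?case using assms(2)[OF update(3)] by simp
qed

definition keys_sum :: "('a \<Rightarrow> 'b::zero \<Rightarrow> 'c::comm_monoid_add) \<Rightarrow> ('a \<Rightarrow>\<^sub>0 'b) \<Rightarrow> 'c" where
  "keys_sum G f = (\<Sum>k\<in>Poly_Mapping.keys f. G k (Poly_Mapping.lookup f k))"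

lemma keys_sum_zero [simp]: "keys_sum G 0 = 0"
  by (simp add: keys_sum_def)

lemma keys_sum_single:
  assumes "\<And>k. G k 0 = 0"
  shows "keys_sum G (Poly_Mapping.single k v) = G k v"
  using assms by (simp add: keys_sum_def)

lemma keys_sum_add:
  assumes "\<And>k. G k 0 = 0" "\<And>k x y. G k (x + y) = G k x + G k y"
  shows "keys_sum G (p + q) = keys_sum G p + keys_sum G q"
  unfolding keys_sum_def by (rule setsum_keys_plus_distrib) (use assms in auto)

lemma keys_sum_diff:
  fixes G :: "'a \<Rightarrow> 'b::ab_group_add \<Rightarrow> 'c::ab_group_add"
  assumes "\<And>k. G k 0 = 0" "\<And>k x y. G k (x + y) = G k x + G k y"
  shows "keys_sum G (p - q) = keys_sum G p - keys_sum G q"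
proof -
  have "keys_sum G p = keys_sum G ((p - q) + q)" by simp
  also have "\<dots> = keys_sum G (p - q) + keys_sum G q" by (rule keys_sum_add[OF assms])
  finally show ?thesis by simp
qed

lemma is_ideal_zero: "is_ideal I \<Longrightarrow> 0 \<in> I"
  unfolding is_ideal_def by auto

lemma is_ideal_add: "is_ideal I \<Longrightarrow> a \<in> I \<Longrightarrow> b \<in> I \<Longrightarrow> a + b \<in> I"
  unfolding is_ideal_def by auto

lemma is_ideal_mult: "is_ideal I \<Longrightarrow> a \<in> I \<Longrightarrow> r * a \<in> I"
  unfolding is_ideal_def by auto

lemma is_ideal_diff: "is_ideal I \<Longrightarrow> a \<in> I \<Longrightarrow> b \<in> I \<Longrightarrow> a - b \<in> I"
  unfolding is_ideal_def by (metis diff_conv_add_uminus mult_minus1)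

lemma is_ideal_ideal_gen: "is_ideal (ideal_gen G)"
  unfolding ideal_gen_def is_ideal_def by auto

lemma ideal_gen_subset: "G \<subseteq> ideal_gen G"
  unfolding ideal_gen_def by auto

lemma ideal_gen_least: "is_ideal J \<Longrightarrow> G \<subseteq> J \<Longrightarrow> ideal_gen G \<subseteq> J"
  unfolding ideal_gen_def by auto

lemma is_lattice_zero: "is_lattice M \<Longrightarrow> (\<lambda>_. 0) \<in> M"
  unfolding is_lattice_def by auto

lemma is_lattice_add: "is_lattice M \<Longrightarrow> x \<in> M \<Longrightarrow> y \<in> M \<Longrightarrow> (\<lambda>i. x i + y i) \<in> M"
  unfolding is_lattice_def by auto

lemma is_lattice_uminus: "is_lattice M \<Longrightarrow> x \<in> M \<Longrightarrow> (\<lambda>i. - x i) \<in> M"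
  unfolding is_lattice_def by auto

lemma is_lattice_uminus_iff: "is_lattice M \<Longrightarrow> (\<lambda>i. - x i) \<in> M \<longleftrightarrow> x \<in> M"
  using is_lattice_uminus[of M "\<lambda>i. - x i"] is_lattice_uminus[of M x] by auto

lemma is_lattice_diff: "is_lattice M \<Longrightarrow> x \<in> M \<Longrightarrow> y \<in> M \<Longrightarrow> (\<lambda>i. x i - y i) \<in> M"
  using is_lattice_add[of M x "\<lambda>i. - y i"] is_lattice_uminus[of M y] by simp

lemma is_lattice_add_iff: "is_lattice M \<Longrightarrow> a \<in> M \<Longrightarrow> (\<lambda>i. x i + a i) \<in> M \<longleftrightarrow> x \<in> M"
  using is_lattice_diff[of M "\<lambda>i. x i + a i" a] is_lattice_add[of M x a] by auto

lemma is_lattice_smult_nat: "is_lattice M \<Longrightarrow> a \<in> M \<Longrightarrow> (\<lambda>i. int k * a i) \<in> M"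
proof (induction k)
  case 0
  then show ?case using is_lattice_zero by auto
next
  case (Suc k)
  then have "(\<lambda>i. int k * a i + a i) \<in> M" using is_lattice_add by blast
  then show ?case by (simp add: algebra_simps)
qed

lemma is_lattice_smult:
  assumes "is_lattice M" "a \<in> M"
  shows "(\<lambda>i. k * a i) \<in> M"
proof (cases "k \<ge> 0")
  case True
  then show ?thesis using is_lattice_smult_nat[OF assms, of "nat k"] by simp
next
  case False
  have "(\<lambda>i. - (int (nat (- k)) * a i)) \<in> M"
    using is_lattice_smult_nat[OF assms] is_lattice_uminus[OF assms(1)] by blast
  then show ?thesis using False by simp
qed

lemma is_lattice_sum:
  assumes M: "is_lattice M" and "finite A" and "\<And>j. j \<in> A \<Longrightarrow> f j \<in> M"
  shows "(\<lambda>i. \<Sum>j\<in>A. f j i) \<in> M"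
  using assms(2,3)
proof (induction A rule: finite_induct)
  case empty
  then show ?case using is_lattice_zero[OF M] by simp
next
  case (insert x F)
  then have "(\<lambda>i. f x i + (\<Sum>j\<in>F. f j i)) \<in> M" using is_lattice_add[OF M, of "f x"] by auto
  then show ?case using insert by simp
qed

lemma is_lattice_Int: "is_lattice M \<Longrightarrow> is_lattice N \<Longrightarrow> is_lattice (M \<inter> N)"
  unfolding is_lattice_def by auto

section \<open>A lattice ideal determines its lattice\<close>

definition binomial :: "('n::finite \<Rightarrow> int) \<Rightarrow> ('n, 'k::comm_ring_1) mpoly" where
  "binomial a = monom_of (pos_part a) - monom_of (neg_part a)"

lemma lattice_ideal_eq_ideal_gen_binomial: "lattice_ideal L = ideal_gen (binomial ` L)"
  unfolding lattice_ideal_def binomial_def by (simp add: Setcompr_eq_image)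

lemma is_ideal_lattice_ideal: "is_ideal (lattice_ideal L)"
  unfolding lattice_ideal_def by (rule is_ideal_ideal_gen)

lemma binomial_in_lattice_ideal: "a \<in> L \<Longrightarrow> binomial a \<in> lattice_ideal L"
  unfolding lattice_ideal_eq_ideal_gen_binomial using ideal_gen_subset by blast

lemma sum_pos_part_eq_sum_neg_part:
  assumes "(\<Sum>i\<in>UNIV. int (w i) * a i) = 0"
  shows "(\<Sum>i\<in>UNIV. w i * pos_part a i) = (\<Sum>i\<in>UNIV. w i * neg_part (a :: 'n::finite \<Rightarrow> int) i)"
proof -
  have "int (\<Sum>i\<in>UNIV. w i * pos_part a i) - int (\<Sum>i\<in>UNIV. w i * neg_part a i)
      = (\<Sum>i\<in>UNIV. int (w i) * a i)"
    by (simp add: of_nat_sum sum_subtractf[symmetric] pos_part_def neg_part_def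
        right_diff_distrib[symmetric]) (rule sum.cong, auto)
  then have "int (\<Sum>i\<in>UNIV. w i * pos_part a i) = int (\<Sum>i\<in>UNIV. w i * neg_part a i)"
    using assms by simp
  then show ?thesis by (simp only: of_nat_eq_iff)
qed

definition exponent_offset :: "('n \<Rightarrow>\<^sub>0 nat) \<Rightarrow> ('n \<Rightarrow> int) \<Rightarrow> 'n \<Rightarrow> int" where
  "exponent_offset u c = (\<lambda>i. int (Poly_Mapping.lookup u i) - c i)"

definition coset_coeff_sum ::
    "('n \<Rightarrow> int) set \<Rightarrow> ('n \<Rightarrow> int) \<Rightarrow> (('n \<Rightarrow>\<^sub>0 nat) \<Rightarrow>\<^sub>0 'k::comm_ring_1) \<Rightarrow> 'k" where
  "coset_coeff_sum M c f = keys_sum (\<lambda>u x. if exponent_offset u c \<in> M then x else 0) f"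

definition coset_balanced :: "('n \<Rightarrow> int) set \<Rightarrow> (('n \<Rightarrow>\<^sub>0 nat) \<Rightarrow>\<^sub>0 'k::comm_ring_1) set" where
  "coset_balanced M = {f. \<forall>c. coset_coeff_sum M c f = 0}"

lemma coset_coeff_sum_zero [simp]: "coset_coeff_sum M c 0 = 0"
  unfolding coset_coeff_sum_def by simp

lemma coset_coeff_sum_add: "coset_coeff_sum M c (p + q) = coset_coeff_sum M c p + coset_coeff_sum M c q"
  unfolding coset_coeff_sum_def by (rule keys_sum_add) auto

lemma coset_coeff_sum_diff: "coset_coeff_sum M c (p - q) = coset_coeff_sum M c p - coset_coeff_sum M c q"
  unfolding coset_coeff_sum_def by (rule keys_sum_diff) auto

lemma coset_coeff_sum_single:
  "coset_coeff_sum M c (Poly_Mapping.single u x) = (if exponent_offset u c \<in> M then x else 0)"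
  unfolding coset_coeff_sum_def by (rule keys_sum_single) auto

lemma coset_coeff_sum_monom_of:
  "coset_coeff_sum M c (monom_of u) = (if (\<lambda>i. int (u i) - c i) \<in> M then 1 else 0)"
  unfolding monom_of_def coset_coeff_sum_single exponent_offset_def by simp

lemma coset_coeff_sum_single_mult:
  "coset_coeff_sum M c (Poly_Mapping.single v a * f)
     = a * coset_coeff_sum M (\<lambda>i. c i - int (Poly_Mapping.lookup v i)) f"
proof (induction f arbitrary: c rule: poly_mapping_single_add_induct)
  case zero
  then show ?case by simp
next
  case (single_add u b f)
  have "exponent_offset (v + u) c = exponent_offset u (\<lambda>i. c i - int (Poly_Mapping.lookup v i))"
    by (auto simp: exponent_offset_def lookup_add)
  then show ?case
    by (simp add: distrib_left coset_coeff_sum_add single_add mult_single coset_coeff_sum_single)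
qed

lemma is_ideal_coset_balanced:
  "is_ideal (coset_balanced M :: (('n \<Rightarrow>\<^sub>0 nat) \<Rightarrow>\<^sub>0 'k::comm_ring_1) set)"
  unfolding is_ideal_def
proof (intro conjI ballI allI)
  show "0 \<in> coset_balanced M" by (simp add: coset_balanced_def)
  fix a b :: "('n \<Rightarrow>\<^sub>0 nat) \<Rightarrow>\<^sub>0 'k"
  assume "a \<in> coset_balanced M" "b \<in> coset_balanced M"
  then show "a + b \<in> coset_balanced M" by (simp add: coset_balanced_def coset_coeff_sum_add)
next
  fix r a :: "('n \<Rightarrow>\<^sub>0 nat) \<Rightarrow>\<^sub>0 'k"
  assume a: "a \<in> coset_balanced M"
  show "r * a \<in> coset_balanced M"
  proof (induction r rule: poly_mapping_single_add_induct)
    case zero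
    then show ?case by (simp add: coset_balanced_def)
  next
    case (single_add u b f)
    then show ?case
      using a by (simp add: coset_balanced_def distrib_right coset_coeff_sum_add coset_coeff_sum_single_mult)
  qed
qed

lemma binomial_in_coset_balanced:
  assumes M: "is_lattice M" and a: "a \<in> M"
  shows "(binomial a :: ('n::finite, 'k::comm_ring_1) mpoly) \<in> coset_balanced M"
proof -
  have "coset_coeff_sum M c (binomial a :: ('n, 'k) mpoly) = 0" for c
  proof -
    have "(\<lambda>i. int (pos_part a i) - c i) = (\<lambda>i. (int (neg_part a i) - c i) + a i)"
      by (auto simp: pos_part_def neg_part_def)
    then show ?thesis
      by (simp add: binomial_def coset_coeff_sum_diff coset_coeff_sum_monom_of is_lattice_add_iff[OF M a])
  qed
  then show ?thesis by (simp add: coset_balanced_def)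
qed

text \<open>The coset of \<open>t^a\<^sup>+\<close> contains \<open>t^a\<^sup>-\<close> only if \<open>a \<in> M\<close>.\<close>

lemma mem_lattice_if_binomial_in_coset_balanced:
  assumes M: "is_lattice M"
    and "(binomial a :: ('n::finite, 'k::comm_ring_1) mpoly) \<in> coset_balanced M"
  shows "a \<in> M"
proof -
  define c where "c = (\<lambda>i. int (pos_part a i))"
  have "coset_coeff_sum M c (binomial a :: ('n, 'k) mpoly) = 0"
    using assms(2) by (simp add: coset_balanced_def)
  moreover have "(\<lambda>i. int (pos_part a i) - c i) = (\<lambda>_. 0)" by (simp add: c_def)
  moreover have "(\<lambda>i. int (neg_part a i) - c i) = (\<lambda>i. - a i)"
    by (auto simp: c_def pos_part_def neg_part_def)
  ultimately have "(\<lambda>i. - a i) \<in> M"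
    using is_lattice_zero[OF M]
    by (simp add: binomial_def coset_coeff_sum_diff coset_coeff_sum_monom_of split: if_splits)
  then show ?thesis using is_lattice_uminus_iff[OF M] by blast
qed

lemma lattice_ideal_subset_coset_balanced:
  "is_lattice L \<Longrightarrow> (lattice_ideal L :: ('n::finite, 'k::comm_ring_1) mpoly set) \<subseteq> coset_balanced L"
  unfolding lattice_ideal_eq_ideal_gen_binomial
  by (rule ideal_gen_least[OF is_ideal_coset_balanced]) (auto intro: binomial_in_coset_balanced)

lemma binomial_in_lattice_ideal_iff:
  "is_lattice L \<Longrightarrow> (binomial a :: ('n::finite, 'k::comm_ring_1) mpoly) \<in> lattice_ideal L \<longleftrightarrow> a \<in> L"
  using mem_lattice_if_binomial_in_coset_balanced lattice_ideal_subset_coset_balanced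
    binomial_in_lattice_ideal by blast

lemma lattice_ideal_inject:
  assumes "is_lattice L" "is_lattice M"
    and "(lattice_ideal L :: ('n::finite, 'k::comm_ring_1) mpoly set) = lattice_ideal M"
  shows "L = M"
  using binomial_in_lattice_ideal_iff[OF assms(1), where 'k = 'k]
    binomial_in_lattice_ideal_iff[OF assms(2), where 'k = 'k] assms(3) by blast

section \<open>The lattice of vectors with coordinate sum zero\<close>

definition zero_sum_lattice :: "('n::finite \<Rightarrow> int) set" where
  "zero_sum_lattice = {a. (\<Sum>i\<in>UNIV. a i) = 0}"

definition unit_diff :: "'n \<Rightarrow> 'n \<Rightarrow> 'n \<Rightarrow> int" where
  "unit_diff i s = (\<lambda>j. if j = i then 1 else if j = s then -1 else 0)"

definition var_diff_ideal :: "'n \<Rightarrow> ('n::finite, 'k::comm_ring_1) mpoly set" where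
  "var_diff_ideal s = ideal_gen {var i - var s | i. i \<noteq> s}"

lemma is_ideal_var_diff_ideal: "is_ideal (var_diff_ideal s)"
  unfolding var_diff_ideal_def by (rule is_ideal_ideal_gen)

lemma is_lattice_zero_sum_lattice: "is_lattice zero_sum_lattice"
  unfolding is_lattice_def zero_sum_lattice_def by (auto simp: sum.distrib sum_negf)

lemma unit_diff_in_zero_sum_lattice:
  assumes "i \<noteq> s"
  shows "unit_diff i s \<in> zero_sum_lattice"
proof -
  have "(\<Sum>j\<in>UNIV. unit_diff i s j) = (\<Sum>j\<in>UNIV. (if j = i then 1 else 0) - (if j = s then 1 else 0))"
    by (rule sum.cong) (auto simp: unit_diff_def assms)
  also have "\<dots> = 0" by (simp add: sum_subtractf)
  finally show ?thesis by (simp add: zero_sum_lattice_def)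
qed

lemma torsion_free_quot_zero_sum_lattice: "torsion_free_quot zero_sum_lattice"
  unfolding torsion_free_quot_def zero_sum_lattice_def by (auto simp: sum_distrib_left[symmetric])

lemma binomial_unit_diff:
  assumes "i \<noteq> s"
  shows "(binomial (unit_diff i s) :: ('n::finite, 'k::comm_ring_1) mpoly) = var i - var s"
proof -
  have "Abs_poly_mapping (\<lambda>j. if j = k then 1 else 0) = Poly_Mapping.single k (1::nat)" for k :: 'n
    by (rule poly_mapping_eqI) (auto simp: lookup_single when_def)
  moreover have "pos_part (unit_diff i s) = (\<lambda>j. if j = i then 1 else 0)"
    by (auto simp: pos_part_def unit_diff_def)
  moreover have "neg_part (unit_diff i s) = (\<lambda>j. if j = s then 1 else 0)"
    using assms by (auto simp: neg_part_def unit_diff_def)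
  ultimately show ?thesis by (simp add: binomial_def monom_of_def var_def)
qed

lemma var_diff_in_var_diff_ideal:
  "(var i - var s :: ('n::finite, 'k::comm_ring_1) mpoly) \<in> var_diff_ideal s"
proof (cases "i = s")
  case True
  then show ?thesis using is_ideal_zero[OF is_ideal_ideal_gen] by (simp add: var_diff_ideal_def)
next
  case False
  then show ?thesis unfolding var_diff_ideal_def by (blast intro: ideal_gen_subset[THEN subsetD])
qed

lemma monom_of_diff_var_power_in_var_diff_ideal:
  "(\<Sum>i\<in>UNIV. u i) = n \<Longrightarrow>
    (monom_of u :: ('n::finite, 'k::comm_ring_1) mpoly) - var s ^ n \<in> var_diff_ideal s"
proof (induction n arbitrary: u)
  case 0
  then have "u = (\<lambda>_. 0)" by auto
  then show ?case using is_ideal_zero[OF is_ideal_var_diff_ideal] by (simp add: monom_of_def)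
next
  case (Suc n)
  then obtain i where i: "u i > 0"
    by (metis (mono_tags) gr0I sum.neutral Suc_neq_Zero)
  define u' where "u' = u(i := u i - 1)"
  have "(\<Sum>j\<in>UNIV - {i}. u' j) = (\<Sum>j\<in>UNIV - {i}. u j)"
    by (rule sum.cong) (auto simp: u'_def)
  then have deg: "(\<Sum>j\<in>UNIV. u' j) = n"
    using Suc.prems i sum.remove[of UNIV i u] sum.remove[of UNIV i u'] by (simp add: u'_def)
  have "Poly_Mapping.single i 1 + Abs_poly_mapping u' = Abs_poly_mapping u"
    by (rule poly_mapping_eqI) (use i in \<open>auto simp: lookup_add lookup_single when_def u'_def\<close>)
  then have "(monom_of u :: ('n, 'k) mpoly) = var i * monom_of u'"
    unfolding monom_of_def var_def mult_single by simp
  then have "(monom_of u :: ('n, 'k) mpoly) - var s ^ Suc n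
      = var i * (monom_of u' - var s ^ n) + var s ^ n * (var i - var s)"
    by (simp add: algebra_simps)
  moreover have "var i * (monom_of u' - var s ^ n) \<in> (var_diff_ideal s :: ('n, 'k) mpoly set)"
    by (rule is_ideal_mult[OF is_ideal_var_diff_ideal Suc.IH[OF deg]])
  moreover have "var s ^ n * (var i - var s) \<in> (var_diff_ideal s :: ('n, 'k) mpoly set)"
    by (rule is_ideal_mult[OF is_ideal_var_diff_ideal var_diff_in_var_diff_ideal])
  ultimately show ?case by (simp add: is_ideal_add[OF is_ideal_var_diff_ideal])
qed

lemma binomial_in_var_diff_ideal:
  assumes "a \<in> zero_sum_lattice"
  shows "(binomial a :: ('n::finite, 'k::comm_ring_1) mpoly) \<in> var_diff_ideal s"
proof -
  have "(\<Sum>i\<in>UNIV. 1 * pos_part a i) = (\<Sum>i\<in>UNIV. 1 * neg_part a i)"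
    by (rule sum_pos_part_eq_sum_neg_part) (use assms in \<open>simp add: zero_sum_lattice_def\<close>)
  then have "(monom_of (pos_part a) - var s ^ (\<Sum>i\<in>UNIV. neg_part a i))
      - (monom_of (neg_part a) - var s ^ (\<Sum>i\<in>UNIV. neg_part a i)) \<in> (var_diff_ideal s :: ('n, 'k) mpoly set)"
    by (intro is_ideal_diff[OF is_ideal_var_diff_ideal] monom_of_diff_var_power_in_var_diff_ideal) simp_all
  then show ?thesis by (simp add: binomial_def)
qed

lemma lattice_ideal_zero_sum_lattice:
  "(lattice_ideal zero_sum_lattice :: ('n::finite, 'k::comm_ring_1) mpoly set) = var_diff_ideal s"
proof
  show "(lattice_ideal zero_sum_lattice :: ('n, 'k) mpoly set) \<subseteq> var_diff_ideal s"
    unfolding lattice_ideal_eq_ideal_gen_binomial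
    by (rule ideal_gen_least[OF is_ideal_var_diff_ideal]) (auto intro: binomial_in_var_diff_ideal)
  show "var_diff_ideal s \<subseteq> (lattice_ideal zero_sum_lattice :: ('n, 'k) mpoly set)"
    unfolding var_diff_ideal_def
    by (rule ideal_gen_least[OF is_ideal_lattice_ideal])
      (auto simp: binomial_unit_diff[symmetric] intro!: binomial_in_lattice_ideal unit_diff_in_zero_sum_lattice)
qed

lemma lattice_ideal_eq_var_diff_ideal_iff:
  assumes "is_lattice L"
  shows "(lattice_ideal L :: ('n::finite, 'k::comm_ring_1) mpoly set) = var_diff_ideal s
    \<longleftrightarrow> L = zero_sum_lattice"
  using lattice_ideal_inject[OF assms is_lattice_zero_sum_lattice]
    lattice_ideal_zero_sum_lattice[where 'k = 'k and s = s] by auto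

text \<open>For homogeneous \<open>g\<close> the exponents of all monomials of \<open>g\<close> have the same coordinate sum, so
  the cosets of \<open>L \<inter> zero_sum_lattice\<close> meeting \<open>g\<close> are cosets of \<open>L\<close>.\<close>

lemma homogeneous_coset_balanced_Int_zero_sum_lattice:
  assumes L: "is_lattice L" and g: "(g :: ('n::finite, 'k::comm_ring_1) mpoly) \<in> coset_balanced L"
    and "homogeneous g"
  shows "g \<in> coset_balanced (L \<inter> zero_sum_lattice)"
proof -
  obtain d where d: "\<And>m. m \<in> Poly_Mapping.keys g \<Longrightarrow> tdeg m = d"
    using \<open>homogeneous g\<close> unfolding homogeneous_def by blast
  have L': "is_lattice (L \<inter> zero_sum_lattice)"
    by (rule is_lattice_Int[OF L is_lattice_zero_sum_lattice])
  have "coset_coeff_sum (L \<inter> zero_sum_lattice) c g = 0" for c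
  proof (cases "\<exists>u0\<in>Poly_Mapping.keys g. exponent_offset u0 c \<in> L \<inter> zero_sum_lattice")
    case True
    then obtain u0 where u0: "u0 \<in> Poly_Mapping.keys g" "exponent_offset u0 c \<in> L \<inter> zero_sum_lattice"
      by blast
    define c0 where "c0 = (\<lambda>i. int (Poly_Mapping.lookup u0 i))"
    have same_coset: "exponent_offset u c \<in> L \<inter> zero_sum_lattice \<longleftrightarrow> exponent_offset u c0 \<in> L"
      if u: "u \<in> Poly_Mapping.keys g" for u
    proof
      have "exponent_offset u c0 = (\<lambda>i. exponent_offset u c i - exponent_offset u0 c i)"
        by (auto simp: exponent_offset_def c0_def)
      moreover assume "exponent_offset u c \<in> L \<inter> zero_sum_lattice"
      ultimately show "exponent_offset u c0 \<in> L" using is_lattice_diff[OF L] u0 by auto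
    next
      assume "exponent_offset u c0 \<in> L"
      moreover have "int (tdeg u) = int (tdeg u0)" using d u u0(1) by simp
      then have "(\<Sum>i\<in>UNIV. exponent_offset u c0 i) = 0"
        by (simp add: tdeg_def of_nat_sum exponent_offset_def c0_def sum_subtractf)
      moreover have "exponent_offset u c = (\<lambda>i. exponent_offset u c0 i + exponent_offset u0 c i)"
        by (auto simp: exponent_offset_def c0_def)
      ultimately show "exponent_offset u c \<in> L \<inter> zero_sum_lattice"
        using is_lattice_add[OF L'] u0 by (simp add: zero_sum_lattice_def)
    qed
    have "coset_coeff_sum (L \<inter> zero_sum_lattice) c g = coset_coeff_sum L c0 g"
      unfolding coset_coeff_sum_def keys_sum_def by (rule sum.cong) (use same_coset in auto)
    then show ?thesis using g by (simp add: coset_balanced_def)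
  next
    case False
    then show ?thesis unfolding coset_coeff_sum_def keys_sum_def by (intro sum.neutral) auto
  qed
  then show ?thesis by (simp add: coset_balanced_def)
qed

lemma graded_lattice_ideal_imp_subset_zero_sum_lattice:
  assumes L: "is_lattice L"
    and "graded_ideal (lattice_ideal L :: ('n::finite, 'k::comm_ring_1) mpoly set)"
  shows "L \<subseteq> zero_sum_lattice"
proof
  obtain G where G: "\<And>g. g \<in> G \<Longrightarrow> homogeneous g"
    and IG: "(lattice_ideal L :: ('n, 'k) mpoly set) = ideal_gen G"
    using assms(2) unfolding graded_ideal_def by blast
  have "G \<subseteq> coset_balanced (L \<inter> zero_sum_lattice)"
    using IG ideal_gen_subset lattice_ideal_subset_coset_balanced[OF L] G
      homogeneous_coset_balanced_Int_zero_sum_lattice[OF L] by blast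
  then have "(lattice_ideal L :: ('n, 'k) mpoly set) \<subseteq> coset_balanced (L \<inter> zero_sum_lattice)"
    unfolding IG by (rule ideal_gen_least[OF is_ideal_coset_balanced])
  moreover fix a assume "a \<in> L"
  ultimately have "(binomial a :: ('n, 'k) mpoly) \<in> coset_balanced (L \<inter> zero_sum_lattice)"
    using binomial_in_lattice_ideal by blast
  then show "a \<in> zero_sum_lattice"
    using mem_lattice_if_binomial_in_coset_balanced[OF is_lattice_Int[OF L is_lattice_zero_sum_lattice]]
    by blast
qed

section \<open>Evaluation homomorphisms and a chain of prime ideals\<close>

definition is_ring_hom :: "('a::comm_ring_1 \<Rightarrow> 'b::comm_ring_1) \<Rightarrow> bool" where
  "is_ring_hom \<phi> \<longleftrightarrow>
    (\<forall>x y. \<phi> (x + y) = \<phi> x + \<phi> y) \<and> (\<forall>x y. \<phi> (x * y) = \<phi> x * \<phi> y) \<and> \<phi> 1 = 1"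

lemma is_ring_hom_add: "is_ring_hom \<phi> \<Longrightarrow> \<phi> (x + y) = \<phi> x + \<phi> y"
  unfolding is_ring_hom_def by blast

lemma is_ring_hom_mult: "is_ring_hom \<phi> \<Longrightarrow> \<phi> (x * y) = \<phi> x * \<phi> y"
  unfolding is_ring_hom_def by blast

lemma is_ring_hom_one: "is_ring_hom \<phi> \<Longrightarrow> \<phi> 1 = 1"
  unfolding is_ring_hom_def by blast

lemma is_ring_hom_zero: "is_ring_hom \<phi> \<Longrightarrow> \<phi> 0 = 0"
  using is_ring_hom_add[of \<phi> 0 0] by simp

lemma is_ring_hom_power: "is_ring_hom \<phi> \<Longrightarrow> \<phi> (x ^ n) = \<phi> x ^ n"
  by (induction n) (simp_all add: is_ring_hom_one is_ring_hom_mult)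

lemma is_ring_hom_prod: "is_ring_hom \<phi> \<Longrightarrow> \<phi> (prod f A) = (\<Prod>a\<in>A. \<phi> (f a))"
  by (induction A rule: infinite_finite_induct) (simp_all add: is_ring_hom_one is_ring_hom_mult)

lemma is_ring_hom_comp: "is_ring_hom \<sigma> \<Longrightarrow> is_ring_hom \<phi> \<Longrightarrow> is_ring_hom (\<lambda>x. \<sigma> (\<phi> x))"
  unfolding is_ring_hom_def by simp

lemma is_ring_hom_id: "is_ring_hom id"
  unfolding is_ring_hom_def by simp

lemma is_ring_hom_const_poly: "is_ring_hom (\<lambda>c. [:c:])"
  unfolding is_ring_hom_def by simp

lemma is_ring_hom_poly: "is_ring_hom (\<lambda>p. poly p x)"
  unfolding is_ring_hom_def by simp

definition eval_mpoly ::
    "('k::comm_ring_1 \<Rightarrow> 'b::comm_ring_1) \<Rightarrow> ('n::finite \<Rightarrow> 'b) \<Rightarrow> ('n, 'k) mpoly \<Rightarrow> 'b" where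
  "eval_mpoly \<phi> h f = keys_sum (\<lambda>u c. \<phi> c * (\<Prod>i\<in>UNIV. h i ^ Poly_Mapping.lookup u i)) f"

lemma eval_mpoly_zero [simp]: "eval_mpoly \<phi> h 0 = 0"
  unfolding eval_mpoly_def by simp

lemma eval_mpoly_add: "is_ring_hom \<phi> \<Longrightarrow> eval_mpoly \<phi> h (p + q) = eval_mpoly \<phi> h p + eval_mpoly \<phi> h q"
  unfolding eval_mpoly_def
  by (rule keys_sum_add) (simp_all add: is_ring_hom_zero is_ring_hom_add distrib_right)

lemma eval_mpoly_diff: "is_ring_hom \<phi> \<Longrightarrow> eval_mpoly \<phi> h (p - q) = eval_mpoly \<phi> h p - eval_mpoly \<phi> h q"
  unfolding eval_mpoly_def
  by (rule keys_sum_diff) (simp_all add: is_ring_hom_zero is_ring_hom_add distrib_right)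

lemma eval_mpoly_single:
  "is_ring_hom \<phi> \<Longrightarrow>
    eval_mpoly \<phi> h (Poly_Mapping.single u c) = \<phi> c * (\<Prod>i\<in>UNIV. h i ^ Poly_Mapping.lookup u i)"
  unfolding eval_mpoly_def by (rule keys_sum_single) (simp add: is_ring_hom_zero)

lemma eval_mpoly_single_mult:
  assumes "is_ring_hom \<phi>"
  shows "eval_mpoly \<phi> h (Poly_Mapping.single v a * q)
    = eval_mpoly \<phi> h (Poly_Mapping.single v a) * eval_mpoly \<phi> h q"
proof (induction q rule: poly_mapping_single_add_induct)
  case zero
  then show ?case by simp
next
  case (single_add u b f)
  have "eval_mpoly \<phi> h (Poly_Mapping.single (v + u) (a * b))
      = eval_mpoly \<phi> h (Poly_Mapping.single v a) * eval_mpoly \<phi> h (Poly_Mapping.single u b)"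
    using assms
    by (simp add: eval_mpoly_single is_ring_hom_mult lookup_add power_add prod.distrib mult_ac)
  then show ?case
    using assms single_add by (simp add: distrib_left eval_mpoly_add mult_single)
qed

lemma eval_mpoly_mult:
  assumes "is_ring_hom \<phi>"
  shows "eval_mpoly \<phi> h (p * q) = eval_mpoly \<phi> h p * eval_mpoly \<phi> h q"
  by (induction p rule: poly_mapping_single_add_induct)
    (simp_all add: assms distrib_right eval_mpoly_add eval_mpoly_single_mult)

lemma eval_mpoly_one: "is_ring_hom \<phi> \<Longrightarrow> eval_mpoly \<phi> h 1 = 1"
  using eval_mpoly_single[of \<phi> h 0 1] by (simp add: is_ring_hom_one)

lemma eval_mpoly_var: "is_ring_hom \<phi> \<Longrightarrow> eval_mpoly \<phi> h (var i) = h i"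
proof -
  assume "is_ring_hom \<phi>"
  moreover have "(\<Prod>k\<in>UNIV. h k ^ Poly_Mapping.lookup (Poly_Mapping.single i 1) k)
      = (\<Prod>k\<in>UNIV. if k = i then h k else 1)"
    by (rule prod.cong) (auto simp: lookup_single when_def)
  ultimately show ?thesis by (simp add: var_def eval_mpoly_single is_ring_hom_one)
qed

lemma eval_mpoly_monom_of: "is_ring_hom \<phi> \<Longrightarrow> eval_mpoly \<phi> h (monom_of u) = (\<Prod>i\<in>UNIV. h i ^ u i)"
  by (simp add: monom_of_def eval_mpoly_single is_ring_hom_one)

lemma ring_hom_eval_mpoly:
  assumes \<sigma>: "is_ring_hom \<sigma>" and \<phi>: "is_ring_hom \<phi>"
  shows "\<sigma> (eval_mpoly \<phi> h f) = eval_mpoly (\<lambda>c. \<sigma> (\<phi> c)) (\<lambda>i. \<sigma> (h i)) f"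
proof (induction f rule: poly_mapping_single_add_induct)
  case zero
  then show ?case using is_ring_hom_zero[OF \<sigma>] by simp
next
  case (single_add u b f)
  have \<sigma>\<phi>: "is_ring_hom (\<lambda>c. \<sigma> (\<phi> c))"
    by (rule is_ring_hom_comp[OF \<sigma> \<phi>])
  from single_add show ?case
    by (simp add: eval_mpoly_add[OF \<phi>] eval_mpoly_add[OF \<sigma>\<phi>] eval_mpoly_single[OF \<phi>]
        eval_mpoly_single[OF \<sigma>\<phi>] is_ring_hom_add[OF \<sigma>] is_ring_hom_mult[OF \<sigma>]
        is_ring_hom_prod[OF \<sigma>] is_ring_hom_power[OF \<sigma>])
qed

lemma is_ideal_eval_mpoly_kernel:
  "is_ring_hom \<phi> \<Longrightarrow> is_ideal {f. eval_mpoly \<phi> h f = 0}"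
  unfolding is_ideal_def by (simp add: eval_mpoly_add eval_mpoly_mult)

lemma prime_ideal_eval_mpoly_kernel:
  assumes "is_ring_hom \<phi>"
  shows "prime_ideal {f :: ('n::finite, 'k::comm_ring_1) mpoly. eval_mpoly \<phi> (h :: 'n \<Rightarrow> 'b::idom) f = 0}"
  unfolding prime_ideal_def
  using assms by (simp add: is_ideal_eval_mpoly_kernel eval_mpoly_mult eval_mpoly_one)

lemma prime_chain_over_2I:
  assumes "prime_ideal P0" "prime_ideal P1" "prime_ideal P2"
    and "I \<subseteq> P0" "P0 \<subset> P1" "P1 \<subset> P2"
  shows "prime_chain_over I 2"
proof -
  define P where "P = (\<lambda>n::nat. if n = 0 then P0 else if n = 1 then P1 else P2)"
  have "n = 0 \<or> n = 1 \<or> n = 2" if "n \<le> 2" for n :: nat using that by auto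
  then have "\<forall>j\<le>2. prime_ideal (P j) \<and> I \<subseteq> P j" and "\<forall>j<2. P j \<subset> P (Suc j)"
    using assms by (auto simp: P_def)
  then show ?thesis unfolding prime_chain_over_def by blast
qed

lemma eval_mpoly_weight_monom_of:
  assumes "is_ring_hom \<phi>"
  shows "eval_mpoly \<phi> (\<lambda>i. x ^ w i * y) (monom_of u) = x ^ (\<Sum>i\<in>UNIV. w i * u i) * y ^ (\<Sum>i\<in>UNIV. u i)"
  unfolding eval_mpoly_monom_of[OF assms]
  by (simp add: power_mult_distrib power_mult[symmetric] prod.distrib power_sum)

lemma lattice_ideal_subset_weight_kernel:
  fixes w :: "'n::finite \<Rightarrow> nat"
  assumes "L \<subseteq> zero_sum_lattice" and "\<And>a. a \<in> L \<Longrightarrow> (\<Sum>i\<in>UNIV. int (w i) * a i) = 0"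
  shows "(lattice_ideal L :: ('n, 'k::comm_ring_1) mpoly set)
    \<subseteq> {f. eval_mpoly (\<lambda>c. [:[:c:]:]) (\<lambda>i. [:0, 1:] ^ w i * [:[:0, 1:]:]) f = 0}"
    (is "_ \<subseteq> {f. eval_mpoly ?\<phi> ?h f = 0}")
proof -
  have \<phi>: "is_ring_hom ?\<phi>"
    using is_ring_hom_comp[OF is_ring_hom_const_poly is_ring_hom_const_poly] by simp
  show ?thesis
    unfolding lattice_ideal_eq_ideal_gen_binomial
  proof (rule ideal_gen_least)
    show "is_ideal {f :: ('n, 'k) mpoly. eval_mpoly ?\<phi> ?h f = 0}"
      by (rule is_ideal_eval_mpoly_kernel[OF \<phi>])
    show "binomial ` L \<subseteq> {f. eval_mpoly ?\<phi> ?h f = 0}"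
    proof clarify
      fix a assume a: "a \<in> L"
      have "(\<Sum>i\<in>UNIV. w i * pos_part a i) = (\<Sum>i\<in>UNIV. w i * neg_part a i)"
        by (rule sum_pos_part_eq_sum_neg_part) (rule assms(2)[OF a])
      moreover have "(\<Sum>i\<in>UNIV. 1 * pos_part a i) = (\<Sum>i\<in>UNIV. 1 * neg_part a i)"
        by (rule sum_pos_part_eq_sum_neg_part) (use assms(1) a in \<open>auto simp: zero_sum_lattice_def\<close>)
      ultimately show "eval_mpoly ?\<phi> ?h (binomial a) = 0"
        by (simp only: binomial_def eval_mpoly_diff[OF \<phi>] eval_mpoly_weight_monom_of[OF \<phi>]
            mult_1 diff_self)
    qed
  qed
qed

lemma prime_chain_over_2_if_nonconstant_weight:
  fixes w :: "'n::finite \<Rightarrow> nat"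
  assumes "L \<subseteq> zero_sum_lattice" and "\<And>a. a \<in> L \<Longrightarrow> (\<Sum>i\<in>UNIV. int (w i) * a i) = 0"
    and "w i \<noteq> w j"
  shows "prime_chain_over (lattice_ideal L :: ('n, 'k::field) mpoly set) 2"
proof -
  define X :: "'k poly poly" where "X = [:0, 1:]"
  define Y :: "'k poly poly" where "Y = [:[:0, 1:]:]"
  define \<phi>0 :: "'k \<Rightarrow> 'k poly poly" where "\<phi>0 = (\<lambda>c. [:[:c:]:])"
  define \<phi>1 :: "'k \<Rightarrow> 'k poly" where "\<phi>1 = (\<lambda>c. [:c:])"
  define h1 :: "'n \<Rightarrow> 'k poly" where "h1 = (\<lambda>_. [:0, 1:])"
  define P0 where "P0 = {f :: ('n, 'k) mpoly. eval_mpoly \<phi>0 (\<lambda>i. X ^ w i * Y) f = 0}"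
  define P1 where "P1 = {f :: ('n, 'k) mpoly. eval_mpoly \<phi>1 h1 f = 0}"
  define P2 where "P2 = {f :: ('n, 'k) mpoly. eval_mpoly id (\<lambda>_. 0) f = 0}"
  have hom0: "is_ring_hom \<phi>0"
    using is_ring_hom_comp[OF is_ring_hom_const_poly is_ring_hom_const_poly] by (simp add: \<phi>0_def)
  have hom1: "is_ring_hom \<phi>1" unfolding \<phi>1_def by (rule is_ring_hom_const_poly)
  have "Y \<noteq> 0" by (simp add: Y_def)
  have h1_eq: "(\<lambda>i. poly (X ^ w i * Y) 1) = h1"
    unfolding poly_mult poly_power by (simp add: fun_eq_iff h1_def X_def Y_def)
  have "eval_mpoly \<phi>1 h1 f = poly (eval_mpoly \<phi>0 (\<lambda>i. X ^ w i * Y) f) 1" for f :: "('n, 'k) mpoly"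
    using ring_hom_eval_mpoly[OF is_ring_hom_poly[where x = 1] hom0, where h = "\<lambda>i. X ^ w i * Y"]
    unfolding h1_eq by (simp add: \<phi>0_def \<phi>1_def)
  then have "P0 \<subseteq> P1" by (auto simp: P0_def P1_def)
  have "eval_mpoly id (\<lambda>_. 0) f = poly (eval_mpoly \<phi>1 h1 f) 0" for f :: "('n, 'k) mpoly"
    using ring_hom_eval_mpoly[OF is_ring_hom_poly[where x = 0] hom1, where h = h1]
    by (simp add: \<phi>1_def h1_def id_def)
  then have "P1 \<subseteq> P2" by (auto simp: P1_def P2_def)
  have "X ^ w i \<noteq> X ^ w j"
  proof
    assume "X ^ w i = X ^ w j"
    then have "degree (X ^ w i) = degree (X ^ w j)" by simp
    then show False using assms(3) by (simp add: X_def degree_power_eq)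
  qed
  then have "var i - var j \<notin> P0"
    using \<open>Y \<noteq> 0\<close>
    by (simp add: P0_def eval_mpoly_diff[OF hom0] eval_mpoly_var[OF hom0] flip: left_diff_distrib)
  moreover have "var i - var j \<in> P1"
    by (simp add: P1_def eval_mpoly_diff[OF hom1] eval_mpoly_var[OF hom1] h1_def)
  ultimately have "P0 \<subset> P1" using \<open>P0 \<subseteq> P1\<close> by blast
  have "var i \<in> P2 - P1"
    by (simp add: P1_def P2_def eval_mpoly_var[OF hom1] eval_mpoly_var[OF is_ring_hom_id] h1_def)
  then have "P1 \<subset> P2" using \<open>P1 \<subseteq> P2\<close> by blast
  have "lattice_ideal L \<subseteq> P0"
    using lattice_ideal_subset_weight_kernel[OF assms(1,2)] by (simp add: P0_def \<phi>0_def X_def Y_def)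
  moreover have "prime_ideal P0" "prime_ideal P1" "prime_ideal P2"
    unfolding P0_def P1_def P2_def
    by (intro prime_ideal_eval_mpoly_kernel hom0 hom1 is_ring_hom_id)+
  ultimately show ?thesis using \<open>P0 \<subset> P1\<close> \<open>P1 \<subset> P2\<close> by (intro prime_chain_over_2I)
qed

section \<open>Integer weights orthogonal to a saturated lattice\<close>

lemma (in vector_space) exists_linear_functional_vanishing:
  assumes "b \<notin> span S"
  shows "\<exists>g. Vector_Spaces.linear scale ((*) :: 'a \<Rightarrow> 'a \<Rightarrow> 'a) g \<and> g b = 1 \<and> (\<forall>x\<in>S. g x = 0)"
proof -
  interpret F: vector_space "(*) :: 'a \<Rightarrow> 'a \<Rightarrow> 'a"
    by unfold_locales (auto simp: algebra_simps)
  interpret P: vector_space_pair scale "(*) :: 'a \<Rightarrow> 'a \<Rightarrow> 'a" ..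
  obtain B where B: "B \<subseteq> S" "independent B" "S \<subseteq> span B"
    by (rule maximal_independent_subset)
  have "b \<notin> span B" using assms span_mono[OF B(1)] by blast
  then have "b \<notin> B" "independent (insert b B)"
    using span_base independent_insertI[OF _ B(2)] by blast+
  define g where "g = P.construct (insert b B) (\<lambda>x. if x = b then 1 else 0)"
  have lin: "Vector_Spaces.linear scale (*) g"
    unfolding g_def by (rule P.linear_construct[OF \<open>independent (insert b B)\<close>])
  interpret G: Vector_Spaces.linear scale "(*) :: 'a \<Rightarrow> 'a \<Rightarrow> 'a" g by (rule lin)
  have "g x = (if x = b then 1 else 0)" if "x \<in> insert b B" for x
    unfolding g_def by (rule P.construct_basis[OF \<open>independent (insert b B)\<close> that])
  then have "g b = 1" "\<And>x. x \<in> B \<Longrightarrow> g x = 0" using \<open>b \<notin> B\<close> by auto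
  then have "\<forall>x\<in>S. g x = 0" using G.eq_0_on_span B(3) by blast
  then show ?thesis using lin \<open>g b = 1\<close> by blast
qed

lemma rat_common_denominator:
  assumes "finite T"
  shows "\<exists>D::int. D > 0 \<and> (\<forall>v\<in>T. of_int D * (r v :: rat) \<in> \<int>)"
  using assms
proof (induction T rule: finite_induct)
  case empty
  then show ?case by (intro exI[of _ 1]) auto
next
  case (insert x F)
  then obtain D where D: "D > 0" "\<forall>v\<in>F. of_int D * r v \<in> \<int>" by blast
  obtain p d where pd: "quotient_of (r x) = (p, d)" by (cases "quotient_of (r x)")
  then have "d > 0" "of_int d * r x = of_int p"
    using quotient_of_denom_pos[OF pd] quotient_of_div[OF pd] by simp_all
  have "of_int (D * d) * r v \<in> \<int>" if "v \<in> insert x F" for v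
  proof (cases "v = x")
    case True
    then have "of_int (D * d) * r v = of_int D * of_int p"
      using \<open>of_int d * r x = of_int p\<close> by (simp add: mult.assoc)
    then show ?thesis by (metis Ints_mult Ints_of_int)
  next
    case False
    then have "of_int (D * d) * r v = of_int d * (of_int D * r v)" by (simp add: mult_ac)
    then show ?thesis using D(2) False that by (metis Ints_mult Ints_of_int insertE)
  qed
  then show ?case using D(1) \<open>d > 0\<close> by (intro exI[of _ "D * d"]) auto
qed

lemma sum_fun_apply: "sum f A x = (\<Sum>a\<in>A. f a x)"
  by (induction A rule: infinite_finite_induct) auto

definition rat_vec_scale :: "rat \<Rightarrow> ('n \<Rightarrow> rat) \<Rightarrow> 'n \<Rightarrow> rat" where
  "rat_vec_scale c x = (\<lambda>i. c * x i)"

definition of_int_vec :: "('n \<Rightarrow> int) \<Rightarrow> 'n \<Rightarrow> rat" where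
  "of_int_vec a = (\<lambda>i. of_int (a i))"

interpretation rat_vec: vector_space rat_vec_scale
  by unfold_locales (auto simp: rat_vec_scale_def fun_eq_iff algebra_simps)

lemma multiple_in_lattice_if_in_rat_span:
  assumes L: "is_lattice L" and "of_int_vec b \<in> rat_vec.span (of_int_vec ` L)"
  shows "\<exists>D>0. (\<lambda>i. D * b i) \<in> L"
proof -
  obtain t r where t: "finite t" "t \<subseteq> of_int_vec ` L"
    and bt: "(\<Sum>v\<in>t. rat_vec_scale (r v) v) = of_int_vec b"
    using assms(2) by (auto simp: rat_vec.span_explicit)
  obtain D where D: "D > 0" "\<forall>v\<in>t. of_int D * r v \<in> \<int>"
    using rat_common_denominator[OF t(1)] by blast
  have "\<forall>v\<in>t. \<exists>a\<in>L. v = of_int_vec a" using t(2) by blast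
  then obtain f where f: "\<And>v. v \<in> t \<Longrightarrow> f v \<in> L \<and> v = of_int_vec (f v)" by metis
  have "\<forall>v\<in>t. \<exists>c::int. of_int c = of_int D * r v" using D(2) by (metis Ints_cases)
  then obtain c where c: "\<And>v. v \<in> t \<Longrightarrow> of_int (c v) = of_int D * r v" by metis
  have "(\<lambda>i. \<Sum>v\<in>t. c v * f v i) = (\<lambda>i. D * b i)"
  proof
    fix i
    have "(of_int (c v * f v i) :: rat) = of_int D * (r v * v i)" if v: "v \<in> t" for v
    proof -
      have "v i = of_int (f v i)"
        using fun_cong[OF conjunct2[OF f[OF v]], of i] unfolding of_int_vec_def .
      then show ?thesis using c[OF v] by (simp add: mult.assoc)
    qed
    then have "(of_int (\<Sum>v\<in>t. c v * f v i) :: rat) = (\<Sum>v\<in>t. of_int D * (r v * v i))"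
      unfolding of_int_sum by (rule sum.cong[OF refl])
    also have "\<dots> = of_int D * (\<Sum>v\<in>t. rat_vec_scale (r v) v) i"
      by (simp add: sum_fun_apply sum_distrib_left rat_vec_scale_def)
    also have "\<dots> = of_int (D * b i)" using bt by (simp add: of_int_vec_def)
    finally show "(\<Sum>v\<in>t. c v * f v i) = D * b i" by (simp only: of_int_eq_iff)
  qed
  moreover have "(\<lambda>i. \<Sum>v\<in>t. c v * f v i) \<in> L"
    by (rule is_lattice_sum[OF L t(1)], rule is_lattice_smult[OF L]) (use f in blast)
  ultimately show ?thesis using D(1) by auto
qed

lemma exists_rat_weight_vanishing_on_lattice:
  fixes L :: "('n::finite \<Rightarrow> int) set"
  assumes L: "is_lattice L" and tf: "torsion_free_quot L" and "b \<notin> L"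
  shows "\<exists>v. (\<forall>a\<in>L. (\<Sum>i\<in>UNIV. v i * of_int (a i)) = 0) \<and> (\<Sum>i\<in>UNIV. v i * of_int (b i)) = (1::rat)"
proof -
  have "of_int_vec b \<notin> rat_vec.span (of_int_vec ` L)"
  proof
    assume "of_int_vec b \<in> rat_vec.span (of_int_vec ` L)"
    then obtain D where "D > 0" "(\<lambda>i. D * b i) \<in> L"
      using multiple_in_lattice_if_in_rat_span[OF L] by blast
    then show False
      using tf[unfolded torsion_free_quot_def, rule_format, of D b] \<open>b \<notin> L\<close> by simp
  qed
  then obtain g where lin: "Vector_Spaces.linear rat_vec_scale (*) g"
    and gb: "g (of_int_vec b) = 1" and gL: "\<forall>x\<in>of_int_vec ` L. g x = 0"
    by (blast dest: rat_vec.exists_linear_functional_vanishing)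
  interpret G: Vector_Spaces.linear rat_vec_scale "(*) :: rat \<Rightarrow> rat \<Rightarrow> rat" g by (rule lin)
  define e :: "'n \<Rightarrow> 'n \<Rightarrow> rat" where "e = (\<lambda>j i. if i = j then 1 else 0)"
  have g_expand: "g x = (\<Sum>j\<in>UNIV. x j * g (e j))" for x
  proof -
    have "(\<Sum>j\<in>UNIV. rat_vec_scale (x j) (e j)) i = (\<Sum>j\<in>UNIV. if j = i then x i else 0)" for i
      unfolding sum_fun_apply rat_vec_scale_def e_def by (rule sum.cong) auto
    then have "x = (\<Sum>j\<in>UNIV. rat_vec_scale (x j) (e j))" by (simp add: fun_eq_iff)
    then have "g x = g (\<Sum>j\<in>UNIV. rat_vec_scale (x j) (e j))" by (rule arg_cong)
    also have "\<dots> = (\<Sum>j\<in>UNIV. x j * g (e j))" by (simp add: G.sum G.scale)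
    finally show ?thesis .
  qed
  have "(\<Sum>i\<in>UNIV. g (e i) * of_int (a i)) = g (of_int_vec a)" for a
    unfolding g_expand[of "of_int_vec a"] by (simp add: of_int_vec_def mult.commute)
  then show ?thesis using gL gb by (intro exI[of _ "\<lambda>i. g (e i)"]) auto
qed

lemma exists_int_weight_vanishing_on_lattice:
  fixes L :: "('n::finite \<Rightarrow> int) set"
  assumes "is_lattice L" and "torsion_free_quot L" and "b \<notin> L"
  shows "\<exists>w. (\<forall>a\<in>L. (\<Sum>i\<in>UNIV. w i * a i) = 0) \<and> (\<Sum>i\<in>UNIV. w i * b i) \<noteq> 0"
proof -
  obtain v where v: "\<forall>a\<in>L. (\<Sum>i\<in>UNIV. v i * of_int (a i)) = 0"
    "(\<Sum>i\<in>UNIV. v i * of_int (b i)) = (1::rat)"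
    using exists_rat_weight_vanishing_on_lattice[OF assms] by blast
  obtain D where D: "D > 0" "\<forall>i\<in>UNIV. of_int D * v i \<in> \<int>"
    using rat_common_denominator[of UNIV v] by auto
  have "\<exists>c::int. of_int c = of_int D * v i" for i
    using D(2) by (metis Ints_cases UNIV_I)
  then obtain w where w: "\<And>i. of_int (w i) = of_int D * v i" by metis
  have w_sum: "(of_int (\<Sum>i\<in>UNIV. w i * a i) :: rat) = of_int D * (\<Sum>i\<in>UNIV. v i * of_int (a i))"
    for a
    by (simp add: of_int_sum w sum_distrib_left mult.assoc)
  have "(\<Sum>i\<in>UNIV. w i * a i) = 0" if "a \<in> L" for a
  proof -
    have "(of_int (\<Sum>i\<in>UNIV. w i * a i) :: rat) = 0" unfolding w_sum using v(1) that by simp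
    then show ?thesis by (simp only: of_int_eq_0_iff)
  qed
  moreover have "(of_int (\<Sum>i\<in>UNIV. w i * b i) :: rat) = of_int D" unfolding w_sum using v(2) by simp
  then have "(\<Sum>i\<in>UNIV. w i * b i) = D" by (simp only: of_int_eq_iff)
  ultimately show ?thesis using D(1) by (intro exI[of _ w]) auto
qed

text \<open>Adding a constant to a weight does not change it on \<open>zero_sum_lattice\<close>.\<close>

lemma exists_nat_weight_nonconstant:
  fixes w :: "'n::finite \<Rightarrow> int"
  assumes "L \<subseteq> zero_sum_lattice" and "\<forall>a\<in>L. (\<Sum>i\<in>UNIV. w i * a i) = 0"
    and "b \<in> zero_sum_lattice" and "(\<Sum>i\<in>UNIV. w i * b i) \<noteq> 0"
  shows "\<exists>u::'n \<Rightarrow> nat. (\<forall>a\<in>L. (\<Sum>i\<in>UNIV. int (u i) * a i) = 0) \<and> (\<exists>i j. u i \<noteq> u j)"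
proof -
  define C where "C = (\<Sum>i\<in>UNIV. \<bar>w i\<bar>)"
  define u where "u i = nat (w i + C)" for i
  have "\<bar>w i\<bar> \<le> C" for i unfolding C_def by (rule member_le_sum) auto
  then have u: "int (u i) = w i + C" for i using abs_le_iff[of "w i" C] by (simp add: u_def)
  have shift: "(\<Sum>i\<in>UNIV. int (u i) * a i) = (\<Sum>i\<in>UNIV. w i * a i)"
    if "a \<in> zero_sum_lattice" for a
  proof -
    have "(\<Sum>i\<in>UNIV. int (u i) * a i) = (\<Sum>i\<in>UNIV. w i * a i) + C * (\<Sum>i\<in>UNIV. a i)"
      by (simp add: u distrib_right sum.distrib sum_distrib_left)
    then show ?thesis using that by (simp add: zero_sum_lattice_def)
  qed
  have "\<exists>i j. u i \<noteq> u j"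
  proof (rule ccontr)
    assume "\<not> (\<exists>i j. u i \<noteq> u j)"
    then have "(\<Sum>i\<in>UNIV. int (u i) * b i) = (\<Sum>i\<in>UNIV. int (u undefined) * b i)"
      by (metis (no_types, lifting))
    also have "\<dots> = 0"
      using assms(3) by (simp add: zero_sum_lattice_def flip: sum_distrib_left)
    finally show False using shift[OF assms(3)] assms(4) by simp
  qed
  moreover have "\<forall>a\<in>L. (\<Sum>i\<in>UNIV. int (u i) * a i) = 0"
    using shift assms(1,2) by auto
  ultimately show ?thesis by blast
qed

lemma torsion_free_quot_iff_eq_zero_sum_lattice:
  assumes L: "is_lattice L" and sub: "L \<subseteq> zero_sum_lattice"
    and no_chain: "\<not> prime_chain_over (lattice_ideal L :: ('n::finite, 'k::field) mpoly set) 2"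
  shows "torsion_free_quot L \<longleftrightarrow> L = zero_sum_lattice"
proof
  assume tf: "torsion_free_quot L"
  show "L = zero_sum_lattice"
  proof (rule ccontr)
    assume "L \<noteq> zero_sum_lattice"
    then obtain b where b: "b \<in> zero_sum_lattice" "b \<notin> L" using sub by blast
    then obtain w where "\<forall>a\<in>L. (\<Sum>i\<in>UNIV. w i * a i) = 0" "(\<Sum>i\<in>UNIV. w i * b i) \<noteq> 0"
      using exists_int_weight_vanishing_on_lattice[OF L tf] by blast
    then obtain u :: "'n \<Rightarrow> nat" and i j
      where u: "\<forall>a\<in>L. (\<Sum>i\<in>UNIV. int (u i) * a i) = 0" and "u i \<noteq> u j"
      using exists_nat_weight_nonconstant[OF sub _ b(1)] by blast
    have "prime_chain_over (lattice_ideal L :: ('n, 'k) mpoly set) 2"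
      by (rule prime_chain_over_2_if_nonconstant_weight[OF sub]) (use u \<open>u i \<noteq> u j\<close> in auto)
    then show False using no_chain by blast
  qed
qed (simp add: torsion_free_quot_zero_sum_lattice)

theorem corollary3p20:
  fixes L :: "('n::finite \<Rightarrow> int) set" and s_last :: 'n
  assumes "CARD('n) \<ge> 2"
    and "is_lattice L"
    and "graded_ideal (lattice_ideal L :: ('n, 'k::field) mpoly set)"
    and "krull_dim_quot_eq (lattice_ideal L :: ('n, 'k) mpoly set) 1"
  shows "torsion_free_quot L \<longleftrightarrow>
    (lattice_ideal L :: ('n, 'k) mpoly set) = ideal_gen {var i - var s_last | i. i \<noteq> s_last}"
proof -
  have "L \<subseteq> zero_sum_lattice"
    by (rule graded_lattice_ideal_imp_subset_zero_sum_lattice[OF assms(2,3)])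
  moreover have "\<not> prime_chain_over (lattice_ideal L :: ('n, 'k) mpoly set) 2"
    using assms(4) by (simp add: krull_dim_quot_eq_def numeral_2_eq_2)
  ultimately have "torsion_free_quot L \<longleftrightarrow> L = zero_sum_lattice"
    by (rule torsion_free_quot_iff_eq_zero_sum_lattice[OF assms(2)])
  then show ?thesis
    using lattice_ideal_eq_var_diff_ideal_iff[OF assms(2), where 'k = 'k and s = s_last]
    by (simp add: var_diff_ideal_def)
qed

end
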